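(* If $X$ is a set star Hurewicz space and $Y$ is a compact space, then $X \times Y$ is rectangular set star Hurewicz.
   Context: For a subset $A$ of a space $Z$ and a collection $\mathcal{U}$ of subsets of $Z$, ${\rm St}(A,\mathcal{U}) = \bigcup\{U \in \mathcal{U}: U \cap A \neq \emptyset\}$. A space $X$ is set star Hurewicz if for each nonempty $A \subset X$ and each sequence $(\mathcal{U}_n: n\in\mathbb{N})$ of collections of sets open in $X$ with $\overline{A} \subset \bigcup\mathcal{U}_n$ for all $n$, there are finite $\mathcal{V}_n \subset \mathcal{U}_n$ such that each $x \in A$ lies in ${\rm St}(\bigcup\mathcal{V}_n,\mathcal{U}_n)$ for all but finitely many $n$. The product $X\times Y$ is rectangular set star Hurewicz if for each nonempty set of the form $A \times B \subset X \times Y$ and each sequence $(\mathcal{U}_n: n\in\mathbb{N})$ of collections of sets open in $X\times Y$ with $\overline{A\times B} \subset \bigcup\mathcal{U}_n$ for all $n$, there are finite $\mathcal{V}_n \subset \mathcal{U}_n$ such that each $z \in A \times B$ lies in ${\rm St}(\bigcup\mathcal{V}_n,\mathcal{U}_n)$ for all but finitely many $n$. *)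

theory Defs
  imports "HOL-Analysis.Analysis"
begin

definition St :: "'a set \<Rightarrow> 'a set set \<Rightarrow> 'a set" where
  "St A \<U> = \<Union>{U \<in> \<U>. U \<inter> A \<noteq> {}}"

definition sSH_property :: "'a topology \<Rightarrow> 'a set \<Rightarrow> bool" where
  "sSH_property T A \<longleftrightarrow>
     (\<forall>\<U> :: nat \<Rightarrow> 'a set set.
        (\<forall>n. (\<forall>U\<in>\<U> n. openin T U) \<and> T closure_of A \<subseteq> \<Union>(\<U> n)) \<longrightarrow>
        (\<exists>\<V> :: nat \<Rightarrow> 'a set set. (\<forall>n. finite (\<V> n) \<and> \<V> n \<subseteq> \<U> n) \<and>
           (\<forall>x\<in>A. eventually (\<lambda>n. x \<in> St (\<Union>(\<V> n)) (\<U> n)) sequentially)))"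

definition set_star_Hurewicz :: "'a topology \<Rightarrow> bool" where
  "set_star_Hurewicz X \<longleftrightarrow>
     (\<forall>A. A \<noteq> {} \<and> A \<subseteq> topspace X \<longrightarrow> sSH_property X A)"

definition rectangular_set_star_Hurewicz :: "'a topology \<Rightarrow> 'b topology \<Rightarrow> bool" where
  "rectangular_set_star_Hurewicz X Y \<longleftrightarrow>
     (\<forall>A B. A \<times> B \<noteq> {} \<and> A \<subseteq> topspace X \<and> B \<subseteq> topspace Y \<longrightarrow>
        sSH_property (prod_topology X Y) (A \<times> B))"

end

theory Submission
  imports Defs
begin

text \<open>Let \<open>\<U>\<^sub>n\<close> be open covers of \<open>cl A \<times> cl B\<close>. By the tube lemma for the compact set
  \<open>cl B\<close>, every \<open>x \<in> cl A\<close> has an open neighbourhood \<open>W\<^sub>n x\<close> such that each \<open>W\<^sub>n x \<times> {y}\<close>,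
  \<open>y \<in> cl B\<close>, lies in one of finitely many members \<open>\<F>\<^sub>n x\<close> of \<open>\<U>\<^sub>n\<close>. Apply the
  set-star-Hurewicz property of \<open>X\<close> to the covers \<open>W\<^sub>n ` cl A\<close> of \<open>cl A\<close> and replace every
  selected \<open>W\<^sub>n s\<close> by \<open>\<F>\<^sub>n s\<close>. If \<open>a \<in> W\<^sub>n x\<close> and \<open>W\<^sub>n x\<close> meets a selected \<open>W\<^sub>n s\<close>, then for
  \<open>b \<in> B\<close> the member of \<open>\<F>\<^sub>n x\<close> containing \<open>W\<^sub>n x \<times> {b}\<close> contains \<open>(a, b)\<close> and meets the
  member of \<open>\<F>\<^sub>n s\<close> containing \<open>W\<^sub>n s \<times> {b}\<close>.\<close>

lemma tube_lemma_cover: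
  assumes K: "compactin Y K" and x: "x \<in> topspace X"
    and opens: "\<And>U. U \<in> \<U> \<Longrightarrow> openin (prod_topology X Y) U" and cover: "{x} \<times> K \<subseteq> \<Union>\<U>"
  shows "\<exists>\<F> W. finite \<F> \<and> \<F> \<subseteq> \<U> \<and> openin X W \<and> x \<in> W \<and> (\<forall>y\<in>K. \<exists>U\<in>\<F>. W \<times> {y} \<subseteq> U)"
proof -
  have "\<exists>U G H. U \<in> \<U> \<and> openin X G \<and> openin Y H \<and> x \<in> G \<and> y \<in> H \<and> G \<times> H \<subseteq> U"
    if y: "y \<in> K" for y
  proof -
    obtain U where U: "U \<in> \<U>" "(x, y) \<in> U"
      using cover y by blast
    have "openin (prod_topology X Y) U"
      using opens U(1) .
    then have "\<exists>G H. openin X G \<and> openin Y H \<and> x \<in> G \<and> y \<in> H \<and> G \<times> H \<subseteq> U"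
      using U(2) unfolding openin_prod_topology_alt by blast
    with U(1) show ?thesis
      by blast
  qed
  then obtain U G H where U: "\<And>y. y \<in> K \<Longrightarrow> U y \<in> \<U>"
    and G: "\<And>y. y \<in> K \<Longrightarrow> openin X (G y) \<and> x \<in> G y"
    and H: "\<And>y. y \<in> K \<Longrightarrow> openin Y (H y) \<and> y \<in> H y"
    and box: "\<And>y. y \<in> K \<Longrightarrow> G y \<times> H y \<subseteq> U y"
    by metis
  obtain T where T: "finite T" "T \<subseteq> K" "K \<subseteq> \<Union>(H ` T)"
  proof -
    obtain \<H> where "finite \<H>" "\<H> \<subseteq> H ` K" "K \<subseteq> \<Union>\<H>"
      using compactinD[OF K, of "H ` K"] H by blast
    with that show ?thesis
      using finite_subset_image by metis
  qed
  define W where "W = topspace X \<inter> \<Inter>(G ` T)"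
  have "openin X W"
    unfolding W_def using T G by (intro openin_Int_Inter) auto
  moreover have "x \<in> W"
    unfolding W_def using G T x by blast
  moreover have "\<exists>V\<in>U ` T. W \<times> {y} \<subseteq> V" if y: "y \<in> K" for y
  proof -
    obtain t where t: "t \<in> T" "y \<in> H t"
      using T y by blast
    then have "W \<times> {y} \<subseteq> G t \<times> H t"
      unfolding W_def by blast
    also have "\<dots> \<subseteq> U t"
      using box t T by blast
    finally show ?thesis
      using t by blast
  qed
  moreover have "finite (U ` T)" "U ` T \<subseteq> \<U>"
    using T U by auto
  ultimately show ?thesis
    by blast
qed

lemma tube_refinements:
  assumes K: "compactin Y K" and C: "C \<subseteq> topspace X"
    and opens: "\<And>n. \<forall>U\<in>\<U> n. openin (prod_topology X Y) U"
    and cover: "\<And>n. C \<times> K \<subseteq> \<Union>(\<U> n)"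
  obtains \<F> W where "\<And>n x. x \<in> C \<Longrightarrow> finite (\<F> n x)" "\<And>n x. x \<in> C \<Longrightarrow> \<F> n x \<subseteq> \<U> n"
    "\<And>n x. x \<in> C \<Longrightarrow> openin X (W n x)" "\<And>n x. x \<in> C \<Longrightarrow> x \<in> W n x"
    "\<And>n x y. x \<in> C \<Longrightarrow> y \<in> K \<Longrightarrow> \<exists>U\<in>\<F> n x. W n x \<times> {y} \<subseteq> U"
proof -
  have "\<forall>n. \<forall>x\<in>C. \<exists>\<F> W. finite \<F> \<and> \<F> \<subseteq> \<U> n \<and> openin X W \<and> x \<in> W
      \<and> (\<forall>y\<in>K. \<exists>U\<in>\<F>. W \<times> {y} \<subseteq> U)"
  proof (intro allI ballI)
    fix n x assume x: "x \<in> C"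
    have "x \<in> topspace X"
      using x C by blast
    moreover have "\<And>U. U \<in> \<U> n \<Longrightarrow> openin (prod_topology X Y) U"
      using opens by blast
    moreover have "{x} \<times> K \<subseteq> \<Union>(\<U> n)"
      using x cover[of n] by blast
    ultimately show "\<exists>\<F> W. finite \<F> \<and> \<F> \<subseteq> \<U> n \<and> openin X W \<and> x \<in> W
      \<and> (\<forall>y\<in>K. \<exists>U\<in>\<F>. W \<times> {y} \<subseteq> U)"
      by (rule tube_lemma_cover[OF K])
  qed
  then obtain \<F> W where "\<And>n x. x \<in> C \<Longrightarrow> finite (\<F> n x) \<and> \<F> n x \<subseteq> \<U> n
      \<and> openin X (W n x) \<and> x \<in> W n x \<and> (\<forall>y\<in>K. \<exists>U\<in>\<F> n x. W n x \<times> {y} \<subseteq> U)"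
    by metis
  then have "\<And>n x. x \<in> C \<Longrightarrow> finite (\<F> n x)" "\<And>n x. x \<in> C \<Longrightarrow> \<F> n x \<subseteq> \<U> n"
    "\<And>n x. x \<in> C \<Longrightarrow> openin X (W n x)" "\<And>n x. x \<in> C \<Longrightarrow> x \<in> W n x"
    "\<And>n x y. x \<in> C \<Longrightarrow> y \<in> K \<Longrightarrow> \<exists>U\<in>\<F> n x. W n x \<times> {y} \<subseteq> U"
    by blast+
  then show ?thesis
    by (rule that)
qed

lemma St_Times_through_tubes:
  assumes a: "a \<in> St (\<Union>(W ` S)) (W ` C)" and "S \<subseteq> C" and b: "b \<in> K"
    and tubes: "\<And>x y. x \<in> C \<Longrightarrow> y \<in> K \<Longrightarrow> \<exists>U\<in>\<F> x. W x \<times> {y} \<subseteq> U"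
    and refines: "\<And>x. x \<in> C \<Longrightarrow> \<F> x \<subseteq> \<U>"
  shows "(a, b) \<in> St (\<Union>(\<Union>(\<F> ` S))) \<U>"
proof -
  obtain x p s where x: "x \<in> C" "a \<in> W x" and s: "s \<in> S" and p: "p \<in> W x" "p \<in> W s"
    using a unfolding St_def by blast
  obtain U where U: "U \<in> \<F> x" "W x \<times> {b} \<subseteq> U"
    using tubes x(1) b by blast
  obtain U' where U': "U' \<in> \<F> s" "W s \<times> {b} \<subseteq> U'"
    using tubes s \<open>S \<subseteq> C\<close> b by blast
  have "(p, b) \<in> U \<inter> \<Union>(\<Union>(\<F> ` S))"
    using U U' s p by blast
  moreover have "U \<in> \<U>" "(a, b) \<in> U"
    using U x refines by blast+
  ultimately show ?thesis
    unfolding St_def by blast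
qed

lemma finite_subset_image_seq:
  assumes "\<forall>n. finite (\<V> n) \<and> \<V> n \<subseteq> W n ` C"
  obtains S where "\<And>n. S n \<subseteq> C" "\<And>n. finite (S n)" "\<And>n. \<V> n = W n ` S n"
proof -
  have "\<forall>n. \<exists>S\<subseteq>C. finite S \<and> \<V> n = W n ` S"
    using assms by (intro allI finite_subset_image) auto
  then obtain S where "\<forall>n. S n \<subseteq> C \<and> finite (S n) \<and> \<V> n = W n ` S n"
    using choice[of "\<lambda>n S. S \<subseteq> C \<and> finite S \<and> \<V> n = W n ` S"] by blast
  then show ?thesis
    using that by blast
qed

lemma sSH_property_Times_compact:
  assumes A: "sSH_property X A" and K: "compactin Y (Y closure_of B)" and B: "B \<subseteq> topspace Y"
  shows "sSH_property (prod_topology X Y) (A \<times> B)"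
  unfolding sSH_property_def
proof (intro allI impI)
  let ?cA = "X closure_of A" and ?cB = "Y closure_of B"
  fix \<U> :: "nat \<Rightarrow> ('a \<times> 'b) set set"
  assume "\<forall>n. (\<forall>U\<in>\<U> n. openin (prod_topology X Y) U) \<and> prod_topology X Y closure_of (A \<times> B) \<subseteq> \<Union>(\<U> n)"
  then have opens: "\<And>n. \<forall>U\<in>\<U> n. openin (prod_topology X Y) U"
    and cover: "\<And>n. ?cA \<times> ?cB \<subseteq> \<Union>(\<U> n)"
    unfolding closure_of_Times by blast+
  obtain \<F> W where \<F>_finite: "\<And>n x. x \<in> ?cA \<Longrightarrow> finite (\<F> n x)"
    and \<F>_sub: "\<And>n x. x \<in> ?cA \<Longrightarrow> \<F> n x \<subseteq> \<U> n"
    and W_open: "\<And>n x. x \<in> ?cA \<Longrightarrow> openin X (W n x)" and W_mem: "\<And>n x. x \<in> ?cA \<Longrightarrow> x \<in> W n x"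
    and tubes: "\<And>n x y. x \<in> ?cA \<Longrightarrow> y \<in> ?cB \<Longrightarrow> \<exists>U\<in>\<F> n x. W n x \<times> {y} \<subseteq> U"
    by (rule tube_refinements[OF K closure_of_subset_topspace opens cover]) (rule that)
  have W_cover: "\<forall>n. (\<forall>V\<in>W n ` ?cA. openin X V) \<and> ?cA \<subseteq> \<Union>(W n ` ?cA)"
    using W_open W_mem by blast
  obtain \<V> where \<V>: "\<forall>n. finite (\<V> n) \<and> \<V> n \<subseteq> W n ` ?cA"
    and star: "\<forall>a\<in>A. eventually (\<lambda>n. a \<in> St (\<Union>(\<V> n)) (W n ` ?cA)) sequentially"
    using A W_cover unfolding sSH_property_def by (elim allE[of _ "\<lambda>n. W n ` ?cA"] impE exE conjE)
  obtain S where S_sub: "\<And>n. S n \<subseteq> ?cA" and S_finite: "\<And>n. finite (S n)"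
    and \<V>_eq: "\<And>n. \<V> n = W n ` S n"
    by (rule finite_subset_image_seq[OF \<V>]) (rule that)
  have "B \<subseteq> ?cB"
    using B by (rule closure_of_subset)
  show "\<exists>\<V>. (\<forall>n. finite (\<V> n) \<and> \<V> n \<subseteq> \<U> n) \<and>
      (\<forall>z\<in>A \<times> B. eventually (\<lambda>n. z \<in> St (\<Union>(\<V> n)) (\<U> n)) sequentially)"
  proof (intro exI conjI allI ballI)
    fix n
    show "finite (\<Union>(\<F> n ` S n))"
      using S_finite S_sub \<F>_finite by (meson finite_UN_I subsetD)
    show "\<Union>(\<F> n ` S n) \<subseteq> \<U> n"
      using S_sub \<F>_sub by blast
  next
    fix z assume "z \<in> A \<times> B"
    then obtain a b where z: "z = (a, b)" "a \<in> A" "b \<in> ?cB"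
      using \<open>B \<subseteq> ?cB\<close> by blast
    show "eventually (\<lambda>n. z \<in> St (\<Union>(\<Union>(\<F> n ` S n))) (\<U> n)) sequentially"
      using star[rule_format, OF z(2)]
    proof (rule eventually_mono)
      fix n assume "a \<in> St (\<Union>(\<V> n)) (W n ` ?cA)"
      then show "z \<in> St (\<Union>(\<Union>(\<F> n ` S n))) (\<U> n)"
        unfolding z(1) \<V>_eq using S_sub z(3) tubes \<F>_sub
        by (rule St_Times_through_tubes)
    qed
  qed
qed

theorem theorem3p17:
  fixes X :: "'a topology" and Y :: "'b topology"
  assumes "set_star_Hurewicz X" and "compact_space Y"
  shows "rectangular_set_star_Hurewicz X Y"
  unfolding rectangular_set_star_Hurewicz_def
proof (intro allI impI)
  fix A B assume AB: "A \<times> B \<noteq> {} \<and> A \<subseteq> topspace X \<and> B \<subseteq> topspace Y"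
  then have "sSH_property X A"
    using assms(1) unfolding set_star_Hurewicz_def by blast
  moreover have "compactin Y (Y closure_of B)"
    using assms(2) closedin_compact_space closedin_closure_of by blast
  ultimately show "sSH_property (prod_topology X Y) (A \<times> B)"
    using AB sSH_property_Times_compact by blast
qed

end
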